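(* Let $\alpha\in(0,1)$ and $c>0$, and let $K_\alpha$ be a class of finite simple undirected graphs that is closed under taking subgraphs and such that every graph $H\in K_\alpha$ with $h$ vertices has a balanced separator of cardinality at most $c\,h^{\alpha}$. Then there is a constant $C$ depending only on $\alpha$ and $c$ such that for every $G\in K_\alpha$ with $n\ge 1$ vertices, every nested dissection order $\pi$ of $G$ and every vertex $v$, the search space $\mathrm{SS}(v)$ in $G_\pi^\wedge$ has at most $C\,n^{\alpha}$ vertices.
   Context: Let $G=(V,E)$ be a finite simple undirected graph with $n=|V|$ vertices. A vertex order is a bijection $\pi:\{1,\dots,n\}\to V$; the rank of $v$ is $\pi^{-1}(v)$. Contracting a vertex $v$ in a graph means deleting $v$ and its incident edges and adding an edge between every pair of former neighbors of $v$ that are not already adjacent. The core graph $G_{\pi,i}$ is obtained from $G$ by contracting $\pi(1),\dots,\pi(i-1)$ in this order. $G_\pi^*$ is the graph on $V$ whose edge set is the union of the edge sets of all $G_{\pi,i}$, $i=1,\dots,n$ (i.e. $G$ together with all edges inserted during the contractions). $G_\pi^\wedge$ is the directed graph obtained from $G_\pi^*$ by orienting every edge from its endpoint of lower rank to its endpoint of higher rank. The search space $\mathrm{SS}(v)$ is the subgraph of $G_\pi^\wedge$ induced by the set of vertices reachable from $v$ in $G_\pi^\wedge$ (including $v$). A balanced separator of a graph with vertex set $V$, $|V|=n$, is a set $S\subseteq V$ such that $V\setminus S$ can be partitioned into sets $A,B$ (possibly empty) with no edge between $A$ and $B$ and $|A|,|B|\le 2n/3$. A nested dissection order of $G$ is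 defined recursively: if $G$ is empty it is the empty order; otherwise choose a balanced separator $S$ of $G$ of minimum cardinality with corresponding parts $A,B$, give the vertices of $S$ the ranks $n-|S|+1,\dots,n$ in arbitrary order, give the vertices of $A$ the ranks $1,\dots,|A|$ according to a nested dissection order of $G[A]$, and the vertices of $B$ the ranks $|A|+1,\dots,|A|+|B|$ according to a nested dissection order of $G[B]$. *)

theory Defs
  imports Complex_Main
begin

definition simple_graph :: "'a set \<Rightarrow> 'a set set \<Rightarrow> bool" where
  "simple_graph V E \<longleftrightarrow> finite V \<and>
     (\<forall>e\<in>E. \<exists>u w. u \<noteq> w \<and> u \<in> V \<and> w \<in> V \<and> e = {u, w})"

definition induced_edges :: "'a set set \<Rightarrow> 'a set \<Rightarrow> 'a set set" where
  "induced_edges E A = {e \<in> E. e \<subseteq> A}"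

definition is_bal_sep :: "'a set \<Rightarrow> 'a set set \<Rightarrow> 'a set \<Rightarrow> 'a set \<Rightarrow> 'a set \<Rightarrow> bool" where
  "is_bal_sep V E S A B \<longleftrightarrow> S \<subseteq> V \<and> A \<union> B = V - S \<and> A \<inter> B = {} \<and>
     (\<forall>a\<in>A. \<forall>b\<in>B. {a, b} \<notin> E) \<and>
     3 * card A \<le> 2 * card V \<and> 3 * card B \<le> 2 * card V"

definition is_min_bal_sep :: "'a set \<Rightarrow> 'a set set \<Rightarrow> 'a set \<Rightarrow> 'a set \<Rightarrow> 'a set \<Rightarrow> bool" where
  "is_min_bal_sep V E S A B \<longleftrightarrow> is_bal_sep V E S A B \<and>
     (\<forall>S' A' B'. is_bal_sep V E S' A' B' \<longrightarrow> card S \<le> card S')"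

inductive nd_order :: "'a set \<Rightarrow> 'a set set \<Rightarrow> (nat \<Rightarrow> 'a) \<Rightarrow> bool" where
  nd_empty: "nd_order {} E \<pi>"
| nd_step: "\<lbrakk> V \<noteq> {}; bij_betw \<pi> {1..card V} V;
              is_min_bal_sep V E S A B;
              bij_betw \<pi> {card V - card S + 1..card V} S;
              nd_order A (induced_edges E A) \<pi>;
              nd_order B (induced_edges E B) (\<lambda>i. \<pi> (card A + i)) \<rbrakk>
             \<Longrightarrow> nd_order V E \<pi>"

definition contract_edges :: "'a set set \<Rightarrow> 'a \<Rightarrow> 'a set set" where
  "contract_edges E v = {e \<in> E. v \<notin> e} \<union>
     {{x, y} | x y. x \<noteq> y \<and> {x, v} \<in> E \<and> {y, v} \<in> E}"

definition contract_vertices :: "'a set \<Rightarrow> 'a \<Rightarrow> 'a set" where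
  "contract_vertices V v = V - {v}"

text \<open>core_edges E pi k: edges after contracting pi 1, ..., pi k in this order;
  so the core graph G_{pi,i} has edge set core_edges E pi (i - 1).\<close>
fun core_edges :: "'a set set \<Rightarrow> (nat \<Rightarrow> 'a) \<Rightarrow> nat \<Rightarrow> 'a set set" where
  "core_edges E \<pi> 0 = E"
| "core_edges E \<pi> (Suc k) = contract_edges (core_edges E \<pi> k) (\<pi> (Suc k))"

definition star_edges :: "'a set \<Rightarrow> 'a set set \<Rightarrow> (nat \<Rightarrow> 'a) \<Rightarrow> 'a set set" where
  "star_edges V E \<pi> = (\<Union>i\<in>{1..card V}. core_edges E \<pi> (i - 1))"

definition rank :: "'a set \<Rightarrow> (nat \<Rightarrow> 'a) \<Rightarrow> 'a \<Rightarrow> nat" where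
  "rank V \<pi> v = inv_into {1..card V} \<pi> v"

definition up_arcs :: "'a set \<Rightarrow> 'a set set \<Rightarrow> (nat \<Rightarrow> 'a) \<Rightarrow> ('a \<times> 'a) set" where
  "up_arcs V E \<pi> = {(u, w). {u, w} \<in> star_edges V E \<pi> \<and> rank V \<pi> u < rank V \<pi> w}"

definition search_space :: "'a set \<Rightarrow> 'a set set \<Rightarrow> (nat \<Rightarrow> 'a) \<Rightarrow> 'a \<Rightarrow> 'a set" where
  "search_space V E \<pi> v = {w. (v, w) \<in> (up_arcs V E \<pi>)\<^sup>*}"

definition subgraph_closed :: "('a set \<times> 'a set set) set \<Rightarrow> bool" where
  "subgraph_closed K \<longleftrightarrow> (\<forall>V E V' E'. (V, E) \<in> K \<longrightarrow> V' \<subseteq> V \<longrightarrow> E' \<subseteq> E \<longrightarrow>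
      (\<forall>e\<in>E'. e \<subseteq> V') \<longrightarrow> (V', E') \<in> K)"

end

theory Submission
  imports Defs
begin

(* Fix a nested dissection order \<pi> of G and write r for the rank.
   (1) A fill edge {x, y} present after contracting \<pi> 1, ..., \<pi> k is witnessed by a
       "low path": a walk in G from x to y whose inner vertices all have rank \<le> k.
       Hence every arc (u, w) of the upward graph is witnessed by a low path whose
       inner vertices have rank < r u.
   (2) Every subproblem W of the recursion occupies a rank interval (off, off + |W|],
       and all its G-neighbours outside W have larger rank ("W is rank closed").
       Low paths cannot leave a rank-closed set downwards, so an arc starting in the
       first side A of the separator never ends in the second side B.
   (3) By induction over the recursion, every v \<in> W lies in a set U \<subseteq> W that is
       closed under arcs up to rank off + |W|, with |U| \<le> C |W|^\<alpha> where
       C = c / (1 - (2/3)^\<alpha>): take the set obtained for the side containing v and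
       add the separator S.  The recurrence C (2/3 w)^\<alpha> + c w^\<alpha> = C w^\<alpha> closes the
       induction.  At the top level (off = 0, W = V) the search space lies in U.
   The file first treats low paths and rank-closed sets abstractly, then the constant,
   then (in a locale for a graph with a vertex order) steps (1) and (2), and finally
   the induction (3) and the theorem. *)

section \<open>Low paths and rank-closed sets\<close>

inductive low_path :: "'a set set \<Rightarrow> ('a \<Rightarrow> nat) \<Rightarrow> nat \<Rightarrow> 'a \<Rightarrow> 'a \<Rightarrow> bool"
  for E r k where
  low_path_edge: "{x, y} \<in> E \<Longrightarrow> low_path E r k x y"
| low_path_via: "low_path E r k x z \<Longrightarrow> low_path E r k z y \<Longrightarrow> r z \<le> k \<Longrightarrow> low_path E r k x y"

lemma low_path_sym: "low_path E r k x y \<Longrightarrow> low_path E r k y x"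
  by (induction rule: low_path.induct) (auto simp: insert_commute intro: low_path.intros)

lemma low_path_mono: "low_path E r k x y \<Longrightarrow> k \<le> k' \<Longrightarrow> low_path E r k' x y"
  by (induction rule: low_path.induct) (auto intro: low_path.intros)

definition adjacency :: "'a set set \<Rightarrow> ('a \<times> 'a) set" where
  "adjacency E = {(a, b). {a, b} \<in> E}"

definition rank_closed :: "('a \<times> 'a) set \<Rightarrow> ('a \<Rightarrow> nat) \<Rightarrow> nat \<Rightarrow> 'a set \<Rightarrow> bool" where
  "rank_closed R r t U \<longleftrightarrow> (\<forall>u\<in>U. \<forall>w. (u, w) \<in> R \<longrightarrow> w \<in> U \<or> t < r w)"

lemma low_path_confined:
  assumes "low_path E r k x y" "x \<in> X" "k \<le> t" "rank_closed (adjacency E) r t X"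
  shows "y \<in> X \<or> t < r y"
  using assms unfolding rank_closed_def adjacency_def
  by (induction rule: low_path.induct) force+

lemma reachable_within_rank_closed:
  assumes "rank_closed R r t U" "v \<in> U" "\<forall>(u, w)\<in>R. r w \<le> t"
  shows "{w. (v, w) \<in> R\<^sup>*} \<subseteq> U"
proof
  fix w assume "w \<in> {w. (v, w) \<in> R\<^sup>*}"
  then have "(v, w) \<in> R\<^sup>*" by simp
  then show "w \<in> U"
    by (induction rule: rtrancl_induct) (use assms in \<open>fastforce simp: rank_closed_def\<close>)+
qed

lemma rank_closed_part:
  assumes "rank_closed R r t W" "X \<subseteq> W" "t' \<le> t"
    and "W - X \<subseteq> Y \<union> Z" "\<forall>x\<in>X. \<forall>y\<in>Y. (x, y) \<notin> R" "\<forall>z\<in>Z. t' < r z"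
  shows "rank_closed R r t' X"
  unfolding rank_closed_def
proof (intro ballI allI impI)
  fix x w assume "x \<in> X" "(x, w) \<in> R"
  then have "w \<in> W \<or> t < r w" using assms(1,2) unfolding rank_closed_def by blast
  then show "w \<in> X \<or> t' < r w"
    using assms(3-6) \<open>x \<in> X\<close> \<open>(x, w) \<in> R\<close> by fastforce
qed

lemma separator_sides_rank_closed:
  assumes sep: "is_bal_sep W F S A B" and F: "F = induced_edges E W"
    and W: "rank_closed (adjacency E) r t W" and S: "\<forall>z\<in>S. s < r z" "a \<le> s" "s \<le> t"
  shows "rank_closed (adjacency E) r a A" "rank_closed (adjacency E) r s B"
proof -
  have parts: "A \<subseteq> W" "B \<subseteq> W" "W - S = A \<union> B" using sep unfolding is_bal_sep_def by auto
  have no_AB: "\<forall>x\<in>A. \<forall>y\<in>B. (x, y) \<notin> adjacency E \<and> (y, x) \<notin> adjacency E"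
  proof (intro ballI conjI)
    fix x y assume "x \<in> A" "y \<in> B"
    then have "{x, y} \<notin> F" "{x, y} \<subseteq> W" using sep parts(1,2) unfolding is_bal_sep_def by blast+
    then show "(x, y) \<notin> adjacency E" "(y, x) \<notin> adjacency E"
      using F unfolding induced_edges_def adjacency_def by (auto simp: insert_commute)
  qed
  show "rank_closed (adjacency E) r a A"
    using rank_closed_part[OF W parts(1), of a B S] parts(3) no_AB S by fastforce
  show "rank_closed (adjacency E) r s B"
    using rank_closed_part[OF W parts(2), of s A S] parts(3) no_AB S by fastforce
qed

section \<open>The constant and its recurrence\<close>

definition nd_bound :: "real \<Rightarrow> real \<Rightarrow> real" where
  "nd_bound \<alpha> c = c / (1 - (2/3) powr \<alpha>)"

lemma two_thirds_powr_less_1: "0 < \<alpha> \<Longrightarrow> (2/3 :: real) powr \<alpha> < 1"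
  using powr_less_mono2[of \<alpha> "2/3" 1] by simp

lemma nd_bound_nonneg: "0 < \<alpha> \<Longrightarrow> 0 \<le> c \<Longrightarrow> 0 \<le> nd_bound \<alpha> c"
  using two_thirds_powr_less_1[of \<alpha>] unfolding nd_bound_def by simp

lemma nd_bound_recurrence:
  assumes "0 < \<alpha>" "0 \<le> c" "3 * a \<le> 2 * (w :: nat)"
  shows "nd_bound \<alpha> c * real a powr \<alpha> + c * real w powr \<alpha> \<le> nd_bound \<alpha> c * real w powr \<alpha>"
proof -
  define q where "q = (2/3 :: real) powr \<alpha>"
  define C where "C = nd_bound \<alpha> c"
  have q1: "q < 1" using two_thirds_powr_less_1[OF assms(1)] unfolding q_def .
  have "real a powr \<alpha> \<le> (2/3 * real w) powr \<alpha>"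
    using assms by (intro powr_mono2) auto
  also have "\<dots> = q * real w powr \<alpha>" unfolding q_def using powr_mult[of "2/3" "real w" \<alpha>] by simp
  finally have "C * real a powr \<alpha> \<le> C * (q * real w powr \<alpha>)"
    using nd_bound_nonneg[OF assms(1,2)] unfolding C_def by (rule mult_left_mono)
  then have "C * real a powr \<alpha> + c * real w powr \<alpha> \<le> (C * q + c) * real w powr \<alpha>"
    by (simp add: algebra_simps)
  also have "C * q + c = C"
    using q1 unfolding C_def nd_bound_def q_def[symmetric] by (simp add: field_simps)
  finally show ?thesis unfolding C_def .
qed

lemma nd_order_bij: "nd_order W F \<rho> \<Longrightarrow> bij_betw \<rho> {1..card W} W"
  by (cases rule: nd_order.cases) (auto simp: bij_betw_def)

lemma bal_sep_card:
  assumes "finite W" "is_bal_sep W F S A B"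
  shows "card W = card A + card B + card S"
proof -
  have parts: "W = (A \<union> B) \<union> S" "A \<inter> B = {}" "(A \<union> B) \<inter> S = {}"
    using assms(2) unfolding is_bal_sep_def by auto
  have "finite A" "finite B" "finite S" using assms(1) parts(1) by simp_all
  then show ?thesis using parts by (simp add: card_Un_disjoint)
qed

lemma induced_subgraph_in_class:
  assumes "subgraph_closed K" "(W, F) \<in> K" "X \<subseteq> W"
  shows "(X, induced_edges F X) \<in> K"
proof -
  have "induced_edges F X \<subseteq> F" "\<forall>e\<in>induced_edges F X. e \<subseteq> X"
    unfolding induced_edges_def by auto
  then show ?thesis using assms unfolding subgraph_closed_def by blast
qed

locale ordered_graph =
  fixes V :: "'a set" and E :: "'a set set" and \<pi> :: "nat \<Rightarrow> 'a"
  assumes simple: "simple_graph V E" and order: "bij_betw \<pi> {1..card V} V"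
begin

abbreviation r :: "'a \<Rightarrow> nat" where "r \<equiv> rank V \<pi>"

lemma finite_V: "finite V"
  using simple simple_graph_def by auto

lemma rank_pi: "i \<in> {1..card V} \<Longrightarrow> r (\<pi> i) = i"
  using order unfolding rank_def bij_betw_def by (simp add: inv_into_f_f)

lemma pi_rank: "x \<in> V \<Longrightarrow> \<pi> (r x) = x"
  using order unfolding rank_def bij_betw_def by (simp add: f_inv_into_f)

lemma rank_range: "x \<in> V \<Longrightarrow> r x \<in> {1..card V}"
  using order unfolding rank_def bij_betw_def by (metis inv_into_into)

lemma edge_vertices: "{x, y} \<in> E \<Longrightarrow> x \<noteq> y \<and> x \<in> V \<and> y \<in> V"
  using simple unfolding simple_graph_def by (auto simp: doubleton_eq_iff)

definition rank_interval :: "nat \<Rightarrow> nat \<Rightarrow> 'a set" where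
  "rank_interval lo hi = {x \<in> V. lo < r x \<and> r x \<le> hi}"

lemma block_rank_interval:
  assumes "bij_betw \<rho> {lo + 1..hi} X" "\<forall>i. \<rho> i = \<pi> (off + i)" "off + hi \<le> card V"
  shows "X = rank_interval (off + lo) (off + hi)"
proof
  show "X \<subseteq> rank_interval (off + lo) (off + hi)"
  proof
    fix x assume "x \<in> X"
    then obtain j where j: "j \<in> {lo + 1..hi}" "x = \<pi> (off + j)"
      using assms(1,2) unfolding bij_betw_def by auto
    then have "r x = off + j" using assms(3) by (intro rank_pi[of "off + j", folded j(2)]) auto
    moreover have "x \<in> V" using j assms(3) order by (auto simp: bij_betw_def)
    ultimately show "x \<in> rank_interval (off + lo) (off + hi)"
      using j(1) unfolding rank_interval_def by auto
  qed
next
  show "rank_interval (off + lo) (off + hi) \<subseteq> X"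
  proof
    fix x assume x: "x \<in> rank_interval (off + lo) (off + hi)"
    then have "r x - off \<in> {lo + 1..hi}" and "\<rho> (r x - off) = x"
      using assms(2) pi_rank unfolding rank_interval_def by auto
    then show "x \<in> X" using assms(1) bij_betw_apply by metis
  qed
qed

subsection \<open>Fill edges are witnessed by low paths\<close>

definition spanned_by_low_paths :: "'a set set \<Rightarrow> nat \<Rightarrow> bool" where
  "spanned_by_low_paths E' k \<longleftrightarrow> (\<forall>x y. {x, y} \<in> E' \<longrightarrow>
     x \<noteq> y \<and> x \<in> V \<and> y \<in> V \<and> k < r x \<and> k < r y \<and> low_path E r k x y)"

lemma spanned_by_low_paths_base: "spanned_by_low_paths E 0"
  unfolding spanned_by_low_paths_def
  using edge_vertices rank_range by (fastforce intro: low_path_edge)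

text \<open>Contracting the vertex of rank k + 1 preserves the invariant: a new edge
  {x, y} arises from two edges through \<pi> (k + 1), which has rank k + 1.\<close>
lemma spanned_by_low_paths_contract:
  assumes inv: "spanned_by_low_paths E' k"
  shows "spanned_by_low_paths (contract_edges E' (\<pi> (Suc k))) (Suc k)"
  unfolding spanned_by_low_paths_def
proof (intro allI impI)
  fix x y assume xy: "{x, y} \<in> contract_edges E' (\<pi> (Suc k))"
  let ?v = "\<pi> (Suc k)"
  have above: "Suc k < r z" if "z \<in> V" "k < r z" "z \<noteq> ?v" for z
    using that pi_rank by (metis Suc_lessI)
  from xy consider (old) "{x, y} \<in> E'" "?v \<notin> {x, y}"
    | (new) a b where "{x, y} = {a, b}" "a \<noteq> b" "{a, ?v} \<in> E'" "{b, ?v} \<in> E'"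
    unfolding contract_edges_def by blast
  then show "x \<noteq> y \<and> x \<in> V \<and> y \<in> V \<and> Suc k < r x \<and> Suc k < r y \<and> low_path E r (Suc k) x y"
  proof cases
    case old
    have "x \<noteq> y \<and> x \<in> V \<and> y \<in> V \<and> k < r x \<and> k < r y \<and> low_path E r k x y"
      using inv old(1) unfolding spanned_by_low_paths_def by blast
    then show ?thesis using above old(2) low_path_mono[of E r k x y "Suc k"] by auto
  next
    case new
    have a: "a \<in> V" "k < r a" "a \<noteq> ?v" "low_path E r k a ?v"
     and b: "b \<in> V" "k < r b" "b \<noteq> ?v" "low_path E r k b ?v"
     and v: "?v \<in> V" "k < r ?v"
      using inv new(3,4) unfolding spanned_by_low_paths_def by blast+
    have "r ?v = Suc k" using v rank_range[OF v(1)] by (intro rank_pi) auto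
    then have ab: "low_path E r (Suc k) a b"
      using low_path_via[OF low_path_mono[OF a(4)] low_path_mono[OF low_path_sym[OF b(4)]]] by simp
    have "Suc k < r a" "Suc k < r b" using a b above by simp_all
    moreover have "(x = a \<and> y = b) \<or> (x = b \<and> y = a)" using new(1) by (simp add: doubleton_eq_iff)
    ultimately show ?thesis using new(2) a(1) b(1) ab low_path_sym[OF ab] by auto
  qed
qed

lemma core_edges_low_paths: "spanned_by_low_paths (core_edges E \<pi> k) k"
  by (induction k) (simp_all add: spanned_by_low_paths_base spanned_by_low_paths_contract)

lemma up_arc_low_path:
  assumes "(u, w) \<in> up_arcs V E \<pi>"
  shows "u \<in> V \<and> w \<in> V \<and> r u < r w \<and> (\<exists>k < r u. low_path E r k u w)"
proof -
  obtain i where "{u, w} \<in> core_edges E \<pi> (i - 1)" and "r u < r w"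
    using assms unfolding up_arcs_def star_edges_def by auto
  then show ?thesis using core_edges_low_paths[of "i - 1"] unfolding spanned_by_low_paths_def by blast
qed

lemma up_arc_into_rank_closed:
  assumes "rank_closed (adjacency E) r t X" "w \<in> X" "(u, w) \<in> up_arcs V E \<pi>" "r u \<le> t"
  shows "u \<in> X"
proof -
  obtain k where "k < r u" "low_path E r k u w" using up_arc_low_path[OF assms(3)] by blast
  then show ?thesis
    using low_path_confined[OF low_path_sym assms(2) _ assms(1)] assms(4) by fastforce
qed

text \<open>Adding the top rank block (s, t] to a set closed up to rank s yields a set
  closed up to rank t, since arcs increase the rank.\<close>
lemma rank_closed_extend:
  assumes "rank_closed (up_arcs V E \<pi>) r s U"
  shows "rank_closed (up_arcs V E \<pi>) r t (U \<union> rank_interval s t)"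
  unfolding rank_closed_def
proof (intro ballI allI impI)
  fix u w assume u: "u \<in> U \<union> rank_interval s t" and arc: "(u, w) \<in> up_arcs V E \<pi>"
  have "w \<in> V" "r u < r w" using up_arc_low_path[OF arc] by auto
  moreover have "w \<in> U \<or> s < r w"
    using u assms arc \<open>r u < r w\<close> unfolding rank_closed_def rank_interval_def by auto
  ultimately show "w \<in> U \<union> rank_interval s t \<or> t < r w"
    unfolding rank_interval_def by auto
qed

text \<open>An arc leaving a set below rank a cannot land in a rank-closed block (a, s]
  lying directly above it: the witnessing low path would leave the block downwards.\<close>
lemma rank_closed_skip_block:
  assumes "rank_closed (up_arcs V E \<pi>) r a U" "\<forall>u\<in>U. r u \<le> a" "U \<inter> B = {}"
    and "B = rank_interval a s" "rank_closed (adjacency E) r s B"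
  shows "rank_closed (up_arcs V E \<pi>) r s U"
  unfolding rank_closed_def
proof (intro ballI allI impI)
  fix u w assume u: "u \<in> U" and arc: "(u, w) \<in> up_arcs V E \<pi>"
  have "w \<in> U \<or> a < r w" using assms(1) u arc unfolding rank_closed_def by blast
  moreover have "w \<notin> B"
  proof
    assume w: "w \<in> B"
    then have "r u \<le> s" using assms(2,4) u unfolding rank_interval_def by fastforce
    then show False using up_arc_into_rank_closed[OF assms(5) w arc] u assms(3) by blast
  qed
  moreover have "w \<in> V" using up_arc_low_path[OF arc] by blast
  ultimately show "w \<in> U \<or> s < r w" using assms(4) unfolding rank_interval_def by auto
qed

lemma dissection_blocks:
  assumes sep: "is_bal_sep W F S A B" and W: "bij_betw \<rho> {1..card W} W"
    and S: "bij_betw \<rho> {card W - card S + 1..card W} S"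
    and A: "bij_betw \<rho> {1..card A} A" and B: "bij_betw (\<lambda>i. \<rho> (card A + i)) {1..card B} B"
    and shift: "\<forall>i. \<rho> i = \<pi> (off + i)" and fit: "off + card W \<le> card V"
  shows "card W = card A + card B + card S"
    and "A = rank_interval off (off + card A)"
    and "B = rank_interval (off + card A) (off + card A + card B)"
    and "S = rank_interval (off + card A + card B) (off + card W)"
proof -
  have "finite W" using bij_betw_finite W by blast
  then show size: "card W = card A + card B + card S" using bal_sep_card sep by blast
  show "A = rank_interval off (off + card A)"
    using block_rank_interval[of \<rho> 0 "card A" A off] A shift fit size by simp
  have "\<forall>i. \<rho> (card A + i) = \<pi> (off + card A + i)" using shift by (simp add: add.assoc)
  then show "B = rank_interval (off + card A) (off + card A + card B)"
    using block_rank_interval[of _ 0 "card B" B "off + card A"] B fit size by (simp add: add.assoc)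
  show "S = rank_interval (off + card A + card B) (off + card W)"
    using block_rank_interval[of \<rho> "card A + card B" "card W" S off] S shift fit size
    by (simp add: add.assoc)
qed

end

section \<open>The search space bound\<close>

locale nd_setting = ordered_graph V E \<pi>
  for V :: "'a set" and E \<pi> +
  fixes K :: "('a set \<times> 'a set set) set" and \<alpha> c :: real
  assumes closed: "subgraph_closed K"
    and separators: "\<forall>(H, F)\<in>K. \<exists>S A B. is_bal_sep H F S A B \<and> real (card S) \<le> c * real (card H) powr \<alpha>"
    and alpha_pos: "0 < \<alpha>" and c_nonneg: "0 \<le> c"
begin

lemma min_separator_small:
  assumes "is_min_bal_sep H F S A B" "(H, F) \<in> K"
  shows "real (card S) \<le> c * real (card H) powr \<alpha>"
proof -
  obtain S' A' B' where "is_bal_sep H F S' A' B'" "real (card S') \<le> c * real (card H) powr \<alpha>"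
    using separators assms(2) by blast
  then show ?thesis using assms(1) unfolding is_min_bal_sep_def by (meson of_nat_le_iff order_trans)
qed

lemma nd_block_bound:
  assumes "nd_order W F \<rho>" "F = induced_edges E W" "\<forall>i. \<rho> i = \<pi> (off + i)"
    "off + card W \<le> card V" "(W, F) \<in> K" "rank_closed (adjacency E) r (off + card W) W" "v \<in> W"
  shows "\<exists>U. v \<in> U \<and> U \<subseteq> W \<and> real (card U) \<le> nd_bound \<alpha> c * real (card W) powr \<alpha>
           \<and> rank_closed (up_arcs V E \<pi>) r (off + card W) U"
  using assms
proof (induction arbitrary: off v rule: nd_order.induct)
  case (nd_empty F \<rho>)
  then show ?case by simp
next
  case (nd_step W \<rho> F S A B)
  let ?C = "nd_bound \<alpha> c" and ?arcs = "up_arcs V E \<pi>"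
  let ?a = "off + card A" and ?s = "off + card A + card B" and ?t = "off + card W"
  have sep: "is_bal_sep W F S A B" using nd_step.hyps(3) unfolding is_min_bal_sep_def by simp
  then have parts: "A \<subseteq> W" "B \<subseteq> W" "W - S = A \<union> B" "A \<inter> B = {}"
    and small: "3 * card A \<le> 2 * card W" "3 * card B \<le> 2 * card W"
    unfolding is_bal_sep_def by auto
  note blocks = dissection_blocks[OF sep nd_step.hyps(2,4) nd_order_bij[OF nd_step.hyps(5)]
      nd_order_bij[OF nd_step.hyps(6)] nd_step.prems(2,3)]
  have "\<forall>z\<in>S. ?s < r z" using blocks(4) unfolding rank_interval_def by auto
  then have A_closed: "rank_closed (adjacency E) r ?a A" and B_closed: "rank_closed (adjacency E) r ?s B"
    using separator_sides_rank_closed[OF sep nd_step.prems(1,5), of ?s ?a] blocks(1) by simp_all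
  have induced: "induced_edges F X = induced_edges E X" "(X, induced_edges F X) \<in> K"
    if "X \<subseteq> W" for X
    using that nd_step.prems(1) induced_subgraph_in_class[OF closed nd_step.prems(4)]
    unfolding induced_edges_def by auto
  have fit_A: "?a \<le> card V" and fit_B: "?s \<le> card V" using nd_step.prems(3) blocks(1) by simp_all
  have shift_B: "\<forall>i. \<rho> (card A + i) = \<pi> (off + card A + i)"
    using nd_step.prems(2) by (simp add: add.assoc)
  text \<open>The part of the answer below the separator: the recursive answer for the
    part containing v (none if v \<in> S), closed under arcs up to the separator.\<close>
  obtain U a where U: "v \<in> U \<union> S" "U \<subseteq> W" "3 * a \<le> 2 * card W"
    "real (card U) \<le> ?C * real a powr \<alpha>" "rank_closed ?arcs r ?s U"
  proof -
    consider "v \<in> A" | "v \<in> B" | "v \<in> S" using nd_step.prems(6) parts(3) by auto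
    then show thesis
    proof cases
      case 1
      obtain U where U: "v \<in> U" "U \<subseteq> A" "real (card U) \<le> ?C * real (card A) powr \<alpha>"
        "rank_closed ?arcs r ?a U"
        using nd_step.IH(1)[OF induced(1)[OF parts(1)] nd_step.prems(2) fit_A induced(2)[OF parts(1)]
            A_closed 1] by blast
      have "rank_closed ?arcs r ?s U"
        by (rule rank_closed_skip_block[OF U(4) _ _ blocks(3) B_closed])
          (use U(2) blocks(2) parts(4) in \<open>auto simp: rank_interval_def\<close>)
      then show thesis using U(1,2,3) parts(1) small(1) by (intro that[of U "card A"]) auto
    next
      case 2
      obtain U where U: "v \<in> U" "U \<subseteq> B" "real (card U) \<le> ?C * real (card B) powr \<alpha>"
        "rank_closed ?arcs r ?s U"
        using nd_step.IH(2)[OF induced(1)[OF parts(2)] shift_B fit_B induced(2)[OF parts(2)]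
            B_closed 2] by blast
      then show thesis using parts(2) small(2) by (intro that[of U "card B"]) auto
    next
      case 3
      then show thesis by (intro that[of "{}" 0]) (auto simp: rank_closed_def)
    qed
  qed
  have S_small: "real (card S) \<le> c * real (card W) powr \<alpha>"
    using min_separator_small[OF nd_step.hyps(3) nd_step.prems(4)] .
  have "real (card (U \<union> S)) \<le> real (card U) + real (card S)"
    by (metis card_Un_le of_nat_add of_nat_le_iff)
  also have "\<dots> \<le> ?C * real (card W) powr \<alpha>"
    using U(4) S_small nd_bound_recurrence[OF alpha_pos c_nonneg U(3)] by linarith
  finally have size_US: "real (card (U \<union> S)) \<le> ?C * real (card W) powr \<alpha>" .
  have closed_US: "rank_closed ?arcs r ?t (U \<union> S)"
    using rank_closed_extend[OF U(5), of ?t] by (simp only: blocks(4))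
  have "v \<in> U \<union> S" "U \<union> S \<subseteq> W" using U(1,2) parts(1,2) sep unfolding is_bal_sep_def by auto
  then show ?case using size_US closed_US by (intro exI[of _ "U \<union> S"] conjI)
qed

end

theorem mainTheorem1:
  fixes \<alpha> c :: real
  assumes "0 < \<alpha>" "\<alpha> < 1" "0 < c"
  shows "\<exists>C::real. \<forall>K :: ('a set \<times> 'a set set) set.
           (\<forall>(V, E)\<in>K. simple_graph V E) \<longrightarrow>
           subgraph_closed K \<longrightarrow>
           (\<forall>(H, F)\<in>K. \<exists>S A B. is_bal_sep H F S A B \<and> real (card S) \<le> c * real (card H) powr \<alpha>) \<longrightarrow>
           (\<forall>V E \<pi> v. (V, E) \<in> K \<longrightarrow> card V \<ge> 1 \<longrightarrow> nd_order V E \<pi> \<longrightarrow> v \<in> V \<longrightarrow>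
              real (card (search_space V E \<pi> v)) \<le> C * real (card V) powr \<alpha>)"
proof (intro exI[of _ "nd_bound \<alpha> c"] allI impI)
  fix K :: "('a set \<times> 'a set set) set" and V E \<pi> v
  assume simple: "\<forall>(V, E)\<in>K. simple_graph V E" and closed: "subgraph_closed K"
    and seps: "\<forall>(H, F)\<in>K. \<exists>S A B. is_bal_sep H F S A B \<and> real (card S) \<le> c * real (card H) powr \<alpha>"
    and G: "(V, E) \<in> K" and nd: "nd_order V E \<pi>" and v: "v \<in> V"
  interpret nd_setting V E \<pi> K \<alpha> c
    using simple G nd_order_bij[OF nd] closed seps assms by unfold_locales auto
  have "E = induced_edges E V" "rank_closed (adjacency E) r (0 + card V) V"
    using simple G edge_vertices unfolding simple_graph_def induced_edges_def rank_closed_def adjacency_def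
    by auto
  then obtain U where U: "v \<in> U" "U \<subseteq> V" "real (card U) \<le> nd_bound \<alpha> c * real (card V) powr \<alpha>"
    "rank_closed (up_arcs V E \<pi>) r (0 + card V) U"
    using nd_block_bound[OF nd _ _ _ G _ v, of 0] by auto
  have "search_space V E \<pi> v \<subseteq> U"
    unfolding search_space_def
    using reachable_within_rank_closed[OF U(4) U(1)] up_arc_low_path rank_range by fastforce
  then have "card (search_space V E \<pi> v) \<le> card U"
    using U(2) finite_V by (meson card_mono finite_subset)
  then show "real (card (search_space V E \<pi> v)) \<le> nd_bound \<alpha> c * real (card V) powr \<alpha>"
    using U(3) by linarith
qed

end
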